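(* Let $H$ be a group, $K\lneq H$, $\phi\in\operatorname{Aut}(H)$, $G=\langle H,t;\ tkt^{-1}=\phi(k),\ k\in K\rangle$. For every $g\in G$ there exist $i\in\mathbb{Z}$ and $a\in H$ such that for all $b,c\in H$ with $g^{-1}bg=c$ we have $c=a^{-1}\phi^{i}(b)a$. *)

theory Defs
  imports "HOL-Algebra.Algebra"
begin

text \<open>HNN extension G = < H, t ; t k t^-1 = phi(k), k in K >, built as the
  group presented by generators carrier H plus t, relations: the
  multiplication table of H, and t k t^-1 = phi k for k in K.
  Letters: (Inl h, False) = h, (Inl h, True) = h^-1, (Inr (), False) = t,
  (Inr (), True) = t^-1.\<close>

type_synonym 'a hnn_letter = "('a + unit) \<times> bool"

definition hnn_letters :: "('a, 'b) monoid_scheme \<Rightarrow> 'a hnn_letter set" where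
  "hnn_letters H = {(Inl h, e) | h e. h \<in> carrier H} \<union> {(Inr (), e) | e. True}"

definition hnn_words :: "('a, 'b) monoid_scheme \<Rightarrow> 'a hnn_letter list set" where
  "hnn_words H = {w. set w \<subseteq> hnn_letters H}"

definition letter_inv :: "'a hnn_letter \<Rightarrow> 'a hnn_letter" where
  "letter_inv x = (fst x, \<not> snd x)"

inductive hnn_eq :: "('a, 'b) monoid_scheme \<Rightarrow> 'a set \<Rightarrow> ('a \<Rightarrow> 'a)
    \<Rightarrow> 'a hnn_letter list \<Rightarrow> 'a hnn_letter list \<Rightarrow> bool"
  for H K phi where
  hnn_refl: "hnn_eq H K phi w w"
| hnn_sym: "hnn_eq H K phi w w' \<Longrightarrow> hnn_eq H K phi w' w"
| hnn_trans: "hnn_eq H K phi u w \<Longrightarrow> hnn_eq H K phi w v \<Longrightarrow> hnn_eq H K phi u v"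
| hnn_cancel: "u \<in> hnn_words H \<Longrightarrow> v \<in> hnn_words H \<Longrightarrow> x \<in> hnn_letters H \<Longrightarrow>
    hnn_eq H K phi (u @ [x, letter_inv x] @ v) (u @ v)"
| hnn_mult: "u \<in> hnn_words H \<Longrightarrow> v \<in> hnn_words H \<Longrightarrow> h1 \<in> carrier H \<Longrightarrow> h2 \<in> carrier H \<Longrightarrow>
    hnn_eq H K phi (u @ [(Inl h1, False), (Inl h2, False)] @ v) (u @ [(Inl (h1 \<otimes>\<^bsub>H\<^esub> h2), False)] @ v)"
| hnn_one: "u \<in> hnn_words H \<Longrightarrow> v \<in> hnn_words H \<Longrightarrow>
    hnn_eq H K phi (u @ [(Inl \<one>\<^bsub>H\<^esub>, False)] @ v) (u @ v)"
| hnn_conj: "u \<in> hnn_words H \<Longrightarrow> v \<in> hnn_words H \<Longrightarrow> k \<in> K \<Longrightarrow>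
    hnn_eq H K phi (u @ [(Inr (), False), (Inl k, False), (Inr (), True)] @ v)
                   (u @ [(Inl (phi k), False)] @ v)"

definition hnn_class :: "('a, 'b) monoid_scheme \<Rightarrow> 'a set \<Rightarrow> ('a \<Rightarrow> 'a)
    \<Rightarrow> 'a hnn_letter list \<Rightarrow> 'a hnn_letter list set" where
  "hnn_class H K phi w = {w'. w' \<in> hnn_words H \<and> hnn_eq H K phi w w'}"

definition hnn_group :: "('a, 'b) monoid_scheme \<Rightarrow> 'a set \<Rightarrow> ('a \<Rightarrow> 'a)
    \<Rightarrow> 'a hnn_letter list set monoid" where
  "hnn_group H K phi =
    \<lparr> carrier = hnn_class H K phi ` hnn_words H,
      monoid.mult = (\<lambda>A B. hnn_class H K phi ((SOME w. w \<in> A) @ (SOME w. w \<in> B))),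
      monoid.one = hnn_class H K phi [] \<rparr>"

definition hnn_emb :: "('a, 'b) monoid_scheme \<Rightarrow> 'a set \<Rightarrow> ('a \<Rightarrow> 'a) \<Rightarrow> 'a
    \<Rightarrow> 'a hnn_letter list set" where
  "hnn_emb H K phi h = hnn_class H K phi [(Inl h, False)]"

definition hnn_t :: "('a, 'b) monoid_scheme \<Rightarrow> 'a set \<Rightarrow> ('a \<Rightarrow> 'a) \<Rightarrow> 'a hnn_letter list set" where
  "hnn_t H K phi = hnn_class H K phi [(Inr (), False)]"

definition aut_pow :: "('a, 'b) monoid_scheme \<Rightarrow> ('a \<Rightarrow> 'a) \<Rightarrow> int \<Rightarrow> 'a \<Rightarrow> 'a" where
  "aut_pow H phi i = (if 0 \<le> i then phi ^^ nat i else (inv_into (carrier H) phi) ^^ nat (- i))"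

end

theory Submission
  imports Defs
begin

text \<open>The assignment h \<mapsto> (h, 0), t \<mapsto> (1, 1) respects the defining relations of G in the
  semidirect product H \<rtimes> \<int> with (a, m)(b, n) = (a phi^m(b), m + n), so it induces a
  homomorphism on G. If g \<mapsto> (x, n), then g^-1 \<mapsto> (a^-1, -n) with a = phi^-n(x), and the
  image of g^-1 b g = c reads (c, 0) = (a^-1 phi^-n(b) a, 0).\<close>

section \<open>Integer powers of an automorphism\<close>

lemma funpow_hom: "f \<in> hom G G \<Longrightarrow> f ^^ n \<in> hom G G"
  by (induction n) (auto simp: hom_def Pi_def)

locale group_automorphism = group G for G (structure) +
  fixes \<phi> :: "'a \<Rightarrow> 'a"
  assumes automorphism: "\<phi> \<in> iso G G"
begin

abbreviation \<psi> :: "'a \<Rightarrow> 'a" where "\<psi> \<equiv> inv_into (carrier G) \<phi>"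

lemma bij_automorphism: "bij_betw \<phi> (carrier G) (carrier G)"
  using automorphism by (simp add: iso_def)

lemma automorphism_inv_right: "x \<in> carrier G \<Longrightarrow> \<phi> (\<psi> x) = x"
  using bij_automorphism by (rule bij_betw_inv_into_right)

lemma automorphism_inv_left: "x \<in> carrier G \<Longrightarrow> \<psi> (\<phi> x) = x"
  using bij_automorphism by (rule bij_betw_inv_into_left)

lemma aut_pow_hom: "aut_pow G \<phi> i \<in> hom G G"
  using automorphism iso_set_sym[OF automorphism]
  by (simp add: aut_pow_def funpow_hom iso_imp_homomorphism)

lemma aut_pow_closed [simp]: "x \<in> carrier G \<Longrightarrow> aut_pow G \<phi> i x \<in> carrier G"
  using aut_pow_hom by (rule hom_in_carrier)

lemma aut_pow_mult [simp]:
  "x \<in> carrier G \<Longrightarrow> y \<in> carrier G \<Longrightarrow> aut_pow G \<phi> i (x \<otimes> y) = aut_pow G \<phi> i x \<otimes> aut_pow G \<phi> i y"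
  using aut_pow_hom by (rule hom_mult)

lemma aut_pow_one [simp]: "aut_pow G \<phi> i \<one> = \<one>"
  using hom_one[OF aut_pow_hom] is_group by blast

lemma aut_pow_zero [simp]: "aut_pow G \<phi> 0 x = x"
  by (simp add: aut_pow_def)

lemma aut_pow_1 [simp]: "aut_pow G \<phi> 1 = \<phi>"
  by (simp add: aut_pow_def)

lemma automorphism_one [simp]: "\<phi> \<one> = \<one>"
  using aut_pow_one[of 1] by simp

lemma aut_pow_succ: "x \<in> carrier G \<Longrightarrow> aut_pow G \<phi> (i + 1) x = \<phi> (aut_pow G \<phi> i x)"
proof (cases "0 \<le> i")
  case True
  then have "nat (i + 1) = Suc (nat i)" by simp
  with True show ?thesis by (simp add: aut_pow_def)
next
  case False
  assume x: "x \<in> carrier G"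
  have "nat (- i) = Suc (nat (- (i + 1)))" using False by simp
  moreover have "(\<psi> ^^ n) x \<in> carrier G" for n
    using funpow_hom[OF iso_imp_homomorphism[OF iso_set_sym[OF automorphism]]] x
    by (rule hom_in_carrier)
  ultimately show ?thesis
    using False by (simp add: aut_pow_def automorphism_inv_right)
qed

lemma aut_pow_pred: "x \<in> carrier G \<Longrightarrow> aut_pow G \<phi> (i - 1) x = \<psi> (aut_pow G \<phi> i x)"
  by (metis aut_pow_closed aut_pow_succ automorphism_inv_left diff_add_cancel)

lemma aut_pow_add: "x \<in> carrier G \<Longrightarrow> aut_pow G \<phi> (i + j) x = aut_pow G \<phi> i (aut_pow G \<phi> j x)"
proof (induction i rule: int_induct[where k = 0])
  case (step1 i)
  then show ?case by (metis add.commute add.left_commute aut_pow_closed aut_pow_succ)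
next
  case (step2 i)
  then show ?case by (metis add.commute aut_pow_closed aut_pow_pred diff_add_eq)
qed simp

end

section \<open>Semidirect product with the integers\<close>

definition semidirect_mult :: "('a, 'b) monoid_scheme \<Rightarrow> ('a \<Rightarrow> 'a) \<Rightarrow> 'a \<times> int \<Rightarrow> 'a \<times> int \<Rightarrow> 'a \<times> int"
  where "semidirect_mult G \<phi> = (\<lambda>(a, m) (b, n). (a \<otimes>\<^bsub>G\<^esub> aut_pow G \<phi> m b, m + n))"

context group_automorphism
begin

lemma semidirect_mult_closed:
  "fst p \<in> carrier G \<Longrightarrow> fst q \<in> carrier G \<Longrightarrow> fst (semidirect_mult G \<phi> p q) \<in> carrier G"
  by (auto simp: semidirect_mult_def split: prod.splits)

lemma semidirect_mult_assoc:
  "fst p \<in> carrier G \<Longrightarrow> fst q \<in> carrier G \<Longrightarrow> fst r \<in> carrier G \<Longrightarrow>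
    semidirect_mult G \<phi> (semidirect_mult G \<phi> p q) r = semidirect_mult G \<phi> p (semidirect_mult G \<phi> q r)"
  by (auto simp: semidirect_mult_def aut_pow_add m_assoc add.assoc split: prod.splits)

lemma semidirect_mult_one_left: "fst p \<in> carrier G \<Longrightarrow> semidirect_mult G \<phi> (\<one>, 0) p = p"
  by (auto simp: semidirect_mult_def split: prod.splits)

end

section \<open>The HNN extension is a group\<close>

lemma hnn_words_append [simp]: "u @ v \<in> hnn_words H \<longleftrightarrow> u \<in> hnn_words H \<and> v \<in> hnn_words H"
  by (auto simp: hnn_words_def)

lemma hnn_words_Cons [simp]: "x # v \<in> hnn_words H \<longleftrightarrow> x \<in> hnn_letters H \<and> v \<in> hnn_words H"
  by (auto simp: hnn_words_def)

lemma hnn_words_Nil [simp]: "[] \<in> hnn_words H"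
  by (auto simp: hnn_words_def)

lemma hnn_letters_Inl [simp]: "(Inl h, e) \<in> hnn_letters H \<longleftrightarrow> h \<in> carrier H"
  by (auto simp: hnn_letters_def)

lemma hnn_letters_Inr [simp]: "(Inr u, e) \<in> hnn_letters H"
  by (auto simp: hnn_letters_def)

lemma letter_inv_hnn_letters: "x \<in> hnn_letters H \<Longrightarrow> letter_inv x \<in> hnn_letters H"
  by (auto simp: hnn_letters_def letter_inv_def)

lemma hnn_eq_context:
  assumes "hnn_eq H K \<phi> w w'" "u \<in> hnn_words H" "v \<in> hnn_words H"
  shows "hnn_eq H K \<phi> (u @ w @ v) (u @ w' @ v)"
  using assms(1)
proof (induction rule: hnn_eq.induct)
  case (hnn_cancel x y l)
  then show ?case using hnn_eq.hnn_cancel[of "u @ x" H "y @ v" l K \<phi>] assms by simp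
next
  case (hnn_mult x y h1 h2)
  then show ?case using hnn_eq.hnn_mult[of "u @ x" H "y @ v" h1 h2 K \<phi>] assms by simp
next
  case (hnn_one x y)
  then show ?case using hnn_eq.hnn_one[of "u @ x" H "y @ v" K \<phi>] assms by simp
next
  case (hnn_conj x y k)
  then show ?case using hnn_eq.hnn_conj[of "u @ x" H "y @ v" k K \<phi>] assms by simp
qed (auto intro: hnn_eq.intros)

lemma hnn_class_eqI: "hnn_eq H K \<phi> u u' \<Longrightarrow> hnn_class H K \<phi> u = hnn_class H K \<phi> u'"
  unfolding hnn_class_def by (auto intro: hnn_eq.intros)

lemma hnn_class_self: "w \<in> hnn_words H \<Longrightarrow> w \<in> hnn_class H K \<phi> w"
  unfolding hnn_class_def by (auto intro: hnn_eq.intros)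

lemma hnn_class_some:
  assumes "w \<in> hnn_words H"
  shows "(SOME w'. w' \<in> hnn_class H K \<phi> w) \<in> hnn_words H"
    and "hnn_eq H K \<phi> w (SOME w'. w' \<in> hnn_class H K \<phi> w)"
proof -
  have "(SOME w'. w' \<in> hnn_class H K \<phi> w) \<in> hnn_class H K \<phi> w"
    using hnn_class_self[OF assms] by (rule someI)
  then show "(SOME w'. w' \<in> hnn_class H K \<phi> w) \<in> hnn_words H"
    and "hnn_eq H K \<phi> w (SOME w'. w' \<in> hnn_class H K \<phi> w)"
    by (simp_all add: hnn_class_def)
qed

lemma hnn_class_mult:
  assumes "u \<in> hnn_words H" "v \<in> hnn_words H"
  shows "hnn_class H K \<phi> u \<otimes>\<^bsub>hnn_group H K \<phi>\<^esub> hnn_class H K \<phi> v = hnn_class H K \<phi> (u @ v)"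
proof -
  let ?u = "SOME x. x \<in> hnn_class H K \<phi> u" and ?v = "SOME x. x \<in> hnn_class H K \<phi> v"
  have "hnn_eq H K \<phi> (u @ [] @ v) ([] @ ?u @ v)"
    using hnn_eq_context[OF hnn_class_some(2)[OF assms(1)], of "[]" v] assms by simp
  moreover have "hnn_eq H K \<phi> ([] @ ?u @ v) (?u @ ?v @ [])"
    using hnn_eq_context[OF hnn_class_some(2)[OF assms(2)], of ?u "[]"]
      hnn_class_some(1)[OF assms(1)] by simp
  ultimately have "hnn_eq H K \<phi> (u @ v) (?u @ ?v)"
    by (auto intro: hnn_trans)
  then show ?thesis by (simp add: hnn_group_def hnn_class_eqI)
qed

definition word_inv :: "'a hnn_letter list \<Rightarrow> 'a hnn_letter list"
  where "word_inv w = rev (map letter_inv w)"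

lemma word_inv_hnn_words: "w \<in> hnn_words H \<Longrightarrow> word_inv w \<in> hnn_words H"
  by (auto simp: word_inv_def hnn_words_def letter_inv_hnn_letters)

lemma hnn_eq_word_inv_cancel: "w \<in> hnn_words H \<Longrightarrow> hnn_eq H K \<phi> (word_inv w @ w) []"
proof (induction w)
  case (Cons x w)
  then have x: "x \<in> hnn_letters H" and w: "w \<in> hnn_words H" by auto
  have "hnn_eq H K \<phi> (word_inv w @ [letter_inv x, letter_inv (letter_inv x)] @ w) (word_inv w @ w)"
    using x w word_inv_hnn_words[OF w] letter_inv_hnn_letters[OF x] by (intro hnn_cancel) auto
  moreover have "letter_inv (letter_inv x) = x" by (simp add: letter_inv_def)
  ultimately show ?case using Cons.IH[OF w] by (auto simp: word_inv_def intro: hnn_trans)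
qed (simp add: word_inv_def hnn_refl)

lemma hnn_group_carrier_cases:
  assumes "A \<in> carrier (hnn_group H K \<phi>)"
  obtains w where "w \<in> hnn_words H" "A = hnn_class H K \<phi> w"
  using assms by (auto simp: hnn_group_def)

lemma hnn_group_one: "\<one>\<^bsub>hnn_group H K \<phi>\<^esub> = hnn_class H K \<phi> []"
  by (simp add: hnn_group_def)

lemma hnn_group_group: "group (hnn_group H K \<phi>)"
proof (rule groupI)
  fix A B assume "A \<in> carrier (hnn_group H K \<phi>)" "B \<in> carrier (hnn_group H K \<phi>)"
  then show "A \<otimes>\<^bsub>hnn_group H K \<phi>\<^esub> B \<in> carrier (hnn_group H K \<phi>)"
    by (elim hnn_group_carrier_cases) (simp add: hnn_class_mult, simp add: hnn_group_def)
next
  fix A B C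
  assume "A \<in> carrier (hnn_group H K \<phi>)" "B \<in> carrier (hnn_group H K \<phi>)" "C \<in> carrier (hnn_group H K \<phi>)"
  then show "A \<otimes>\<^bsub>hnn_group H K \<phi>\<^esub> B \<otimes>\<^bsub>hnn_group H K \<phi>\<^esub> C =
      A \<otimes>\<^bsub>hnn_group H K \<phi>\<^esub> (B \<otimes>\<^bsub>hnn_group H K \<phi>\<^esub> C)"
    by (elim hnn_group_carrier_cases) (simp add: hnn_class_mult)
next
  fix A assume "A \<in> carrier (hnn_group H K \<phi>)"
  then obtain w where w: "w \<in> hnn_words H" "A = hnn_class H K \<phi> w"
    by (rule hnn_group_carrier_cases)
  then show "\<one>\<^bsub>hnn_group H K \<phi>\<^esub> \<otimes>\<^bsub>hnn_group H K \<phi>\<^esub> A = A"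
    using hnn_class_mult[of "[]" H w] by (simp add: hnn_group_one)
  have "hnn_class H K \<phi> (word_inv w) \<otimes>\<^bsub>hnn_group H K \<phi>\<^esub> A = \<one>\<^bsub>hnn_group H K \<phi>\<^esub>"
    using w hnn_class_mult[OF word_inv_hnn_words[OF w(1)] w(1)]
      hnn_class_eqI[OF hnn_eq_word_inv_cancel[OF w(1)]]
    by (simp add: hnn_group_one)
  moreover have "hnn_class H K \<phi> (word_inv w) \<in> carrier (hnn_group H K \<phi>)"
    using word_inv_hnn_words[OF w(1)] by (simp add: hnn_group_def)
  ultimately show "\<exists>B \<in> carrier (hnn_group H K \<phi>). B \<otimes>\<^bsub>hnn_group H K \<phi>\<^esub> A = \<one>\<^bsub>hnn_group H K \<phi>\<^esub>"
    by blast
qed (simp add: hnn_group_def)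

section \<open>The projection of the HNN extension onto the semidirect product\<close>

definition hnn_letter_val :: "('a, 'b) monoid_scheme \<Rightarrow> 'a hnn_letter \<Rightarrow> 'a \<times> int"
  where "hnn_letter_val H x =
    (case x of (Inl h, e) \<Rightarrow> (if e then inv\<^bsub>H\<^esub> h else h, 0)
             | (Inr _, e) \<Rightarrow> (\<one>\<^bsub>H\<^esub>, if e then -1 else 1))"

definition hnn_word_val :: "('a, 'b) monoid_scheme \<Rightarrow> ('a \<Rightarrow> 'a) \<Rightarrow> 'a hnn_letter list \<Rightarrow> 'a \<times> int"
  where "hnn_word_val H \<phi> w = foldr (semidirect_mult H \<phi> \<circ> hnn_letter_val H) w (\<one>\<^bsub>H\<^esub>, 0)"

text \<open>Evaluated on an arbitrary representative; independence of the choice is hnn_val_class.\<close>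
definition hnn_val :: "('a, 'b) monoid_scheme \<Rightarrow> 'a set \<Rightarrow> ('a \<Rightarrow> 'a) \<Rightarrow> 'a hnn_letter list set \<Rightarrow> 'a \<times> int"
  where "hnn_val H K \<phi> A = hnn_word_val H \<phi> (SOME w. w \<in> A)"

context group_automorphism
begin

lemma hnn_letter_val_closed: "x \<in> hnn_letters G \<Longrightarrow> fst (hnn_letter_val G x) \<in> carrier G"
  by (auto simp: hnn_letters_def hnn_letter_val_def)

lemma hnn_word_val_Nil [simp]: "hnn_word_val G \<phi> [] = (\<one>, 0)"
  by (simp add: hnn_word_val_def)

lemma hnn_word_val_Cons [simp]:
  "hnn_word_val G \<phi> (x # w) = semidirect_mult G \<phi> (hnn_letter_val G x) (hnn_word_val G \<phi> w)"
  by (simp add: hnn_word_val_def)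

lemma hnn_word_val_closed: "w \<in> hnn_words G \<Longrightarrow> fst (hnn_word_val G \<phi> w) \<in> carrier G"
  by (induction w) (simp_all add: semidirect_mult_closed hnn_letter_val_closed)

lemma hnn_word_val_append:
  "u \<in> hnn_words G \<Longrightarrow> v \<in> hnn_words G \<Longrightarrow>
    hnn_word_val G \<phi> (u @ v) = semidirect_mult G \<phi> (hnn_word_val G \<phi> u) (hnn_word_val G \<phi> v)"
  by (induction u)
    (simp_all add: semidirect_mult_one_left semidirect_mult_assoc hnn_word_val_closed hnn_letter_val_closed)

lemma hnn_word_val_context:
  assumes "hnn_word_val G \<phi> w = hnn_word_val G \<phi> w'"
    and "u \<in> hnn_words G" "w \<in> hnn_words G" "w' \<in> hnn_words G" "v \<in> hnn_words G"
  shows "hnn_word_val G \<phi> (u @ w @ v) = hnn_word_val G \<phi> (u @ w' @ v)"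
  using assms by (simp add: hnn_word_val_append)

lemma hnn_word_val_cancel:
  "x \<in> hnn_letters G \<Longrightarrow> hnn_word_val G \<phi> [x, letter_inv x] = (\<one>, 0)"
  by (auto simp: hnn_letters_def hnn_letter_val_def letter_inv_def semidirect_mult_def)

text \<open>This is the only place where K \<subseteq> carrier G is needed.\<close>
lemma hnn_eq_imp_word_val_eq:
  assumes "hnn_eq G K \<phi> w w'" "K \<subseteq> carrier G"
  shows "hnn_word_val G \<phi> w = hnn_word_val G \<phi> w'"
  using assms(1)
proof (induction rule: hnn_eq.induct)
  case (hnn_cancel u v x)
  then have "hnn_word_val G \<phi> (u @ [x, letter_inv x] @ v) = hnn_word_val G \<phi> (u @ [] @ v)"
    by (intro hnn_word_val_context) (simp_all add: hnn_word_val_cancel letter_inv_hnn_letters del: hnn_word_val_Cons)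
  then show ?case by simp
next
  case (hnn_mult u v h1 h2)
  then show ?case
    using hnn_word_val_context[of "[(Inl h1, False), (Inl h2, False)]" "[(Inl (h1 \<otimes> h2), False)]" u v]
    by (simp add: hnn_letter_val_def semidirect_mult_def)
next
  case (hnn_one u v)
  then show ?case
    using hnn_word_val_context[of "[(Inl \<one>, False)]" "[]" u v]
    by (simp add: hnn_letter_val_def semidirect_mult_def)
next
  case (hnn_conj u v k)
  from hnn_conj.hyps(3) assms(2) have k: "k \<in> carrier G" by blast
  have "\<phi> k \<in> carrier G"
    using k bij_automorphism by (rule bij_betwE[THEN bspec, rotated])
  with hnn_conj k show ?case
    using hnn_word_val_context[of "[(Inr (), False), (Inl k, False), (Inr (), True)]" "[(Inl (\<phi> k), False)]" u v]
    by (simp add: hnn_letter_val_def semidirect_mult_def)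
qed auto

lemma hnn_val_class:
  "K \<subseteq> carrier G \<Longrightarrow> w \<in> hnn_words G \<Longrightarrow> hnn_val G K \<phi> (hnn_class G K \<phi> w) = hnn_word_val G \<phi> w"
  unfolding hnn_val_def using hnn_class_some(2) by (metis hnn_eq_imp_word_val_eq)

lemma hnn_val_mult:
  assumes "K \<subseteq> carrier G" "A \<in> carrier (hnn_group G K \<phi>)" "B \<in> carrier (hnn_group G K \<phi>)"
  shows "hnn_val G K \<phi> (A \<otimes>\<^bsub>hnn_group G K \<phi>\<^esub> B) = semidirect_mult G \<phi> (hnn_val G K \<phi> A) (hnn_val G K \<phi> B)"
  using assms(2,3)
  by (elim hnn_group_carrier_cases) (simp add: hnn_class_mult hnn_val_class[OF assms(1)] hnn_word_val_append)

lemma hnn_val_closed: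
  "K \<subseteq> carrier G \<Longrightarrow> A \<in> carrier (hnn_group G K \<phi>) \<Longrightarrow> fst (hnn_val G K \<phi> A) \<in> carrier G"
  by (elim hnn_group_carrier_cases) (simp add: hnn_val_class hnn_word_val_closed)

lemma hnn_val_one: "K \<subseteq> carrier G \<Longrightarrow> hnn_val G K \<phi> \<one>\<^bsub>hnn_group G K \<phi>\<^esub> = (\<one>, 0)"
  by (simp add: hnn_group_one hnn_val_class)

lemma hnn_val_emb:
  "K \<subseteq> carrier G \<Longrightarrow> h \<in> carrier G \<Longrightarrow> hnn_val G K \<phi> (hnn_emb G K \<phi> h) = (h, 0)"
  by (simp add: hnn_emb_def hnn_val_class hnn_letter_val_def semidirect_mult_def)

lemma hnn_emb_closed: "h \<in> carrier G \<Longrightarrow> hnn_emb G K \<phi> h \<in> carrier (hnn_group G K \<phi>)"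
  by (simp add: hnn_emb_def hnn_group_def)

lemma hnn_val_inv:
  assumes K: "K \<subseteq> carrier G" and g: "g \<in> carrier (hnn_group G K \<phi>)"
    and xn: "hnn_val G K \<phi> g = (x, n)"
  shows "hnn_val G K \<phi> (inv\<^bsub>hnn_group G K \<phi>\<^esub> g) = (inv aut_pow G \<phi> (- n) x, - n)"
proof -
  interpret HNN: group "hnn_group G K \<phi>" by (rule hnn_group_group)
  obtain y m where ym: "hnn_val G K \<phi> (inv\<^bsub>hnn_group G K \<phi>\<^esub> g) = (y, m)" by fastforce
  have x: "x \<in> carrier G" and y: "y \<in> carrier G"
    using hnn_val_closed[OF K g] hnn_val_closed[OF K HNN.inv_closed[OF g]] xn ym by simp_all
  have "semidirect_mult G \<phi> (y, m) (x, n) = (\<one>, 0)"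
    using hnn_val_mult[OF K HNN.inv_closed[OF g] g] HNN.l_inv[OF g] xn ym by (simp add: hnn_val_one[OF K])
  then have "m = - n" and "y \<otimes> aut_pow G \<phi> m x = \<one>"
    by (simp_all add: semidirect_mult_def)
  with x y ym show ?thesis by (metis inv_equality aut_pow_closed)
qed

lemma hnn_val_conjugate:
  assumes K: "K \<subseteq> carrier G" and g: "g \<in> carrier (hnn_group G K \<phi>)" and b: "b \<in> carrier G"
    and xn: "hnn_val G K \<phi> g = (x, n)"
  shows "hnn_val G K \<phi> (inv\<^bsub>hnn_group G K \<phi>\<^esub> g \<otimes>\<^bsub>hnn_group G K \<phi>\<^esub> hnn_emb G K \<phi> b \<otimes>\<^bsub>hnn_group G K \<phi>\<^esub> g)
    = (inv aut_pow G \<phi> (- n) x \<otimes> aut_pow G \<phi> (- n) b \<otimes> aut_pow G \<phi> (- n) x, 0)"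
proof -
  interpret HNN: group "hnn_group G K \<phi>" by (rule hnn_group_group)
  show ?thesis
    using g b xn hnn_val_inv[OF K g xn]
    by (simp add: hnn_val_mult[OF K] hnn_val_emb[OF K] hnn_emb_closed semidirect_mult_def)
qed

end

theorem lemma3p2:
  fixes H :: "('a, 'b) monoid_scheme" and K :: "'a set" and phi :: "'a \<Rightarrow> 'a"
  assumes "group H"
    and "subgroup K H" and "K \<noteq> carrier H"
    and "phi \<in> iso H H"
  shows "\<forall>g \<in> carrier (hnn_group H K phi). \<exists>i :: int. \<exists>a \<in> carrier H.
           \<forall>b \<in> carrier H. \<forall>c \<in> carrier H.
             inv\<^bsub>hnn_group H K phi\<^esub> g \<otimes>\<^bsub>hnn_group H K phi\<^esub> hnn_emb H K phi b
               \<otimes>\<^bsub>hnn_group H K phi\<^esub> g = hnn_emb H K phi c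
             \<longrightarrow> c = inv\<^bsub>H\<^esub> a \<otimes>\<^bsub>H\<^esub> aut_pow H phi i b \<otimes>\<^bsub>H\<^esub> a"
proof
  let ?G = "hnn_group H K phi"
  interpret group_automorphism H phi
    using assms(1,4) by (simp add: group_automorphism_def group_automorphism_axioms_def)
  have K: "K \<subseteq> carrier H" using assms(2) by (rule subgroup.subset)
  fix g assume g: "g \<in> carrier ?G"
  obtain x n where xn: "hnn_val H K phi g = (x, n)" by fastforce
  have x: "x \<in> carrier H" using hnn_val_closed[OF K g] xn by simp
  show "\<exists>i :: int. \<exists>a \<in> carrier H. \<forall>b \<in> carrier H. \<forall>c \<in> carrier H.
      inv\<^bsub>?G\<^esub> g \<otimes>\<^bsub>?G\<^esub> hnn_emb H K phi b \<otimes>\<^bsub>?G\<^esub> g = hnn_emb H K phi c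
      \<longrightarrow> c = inv\<^bsub>H\<^esub> a \<otimes>\<^bsub>H\<^esub> aut_pow H phi i b \<otimes>\<^bsub>H\<^esub> a"
  proof (intro exI bexI ballI impI)
    fix b c assume b: "b \<in> carrier H" and c: "c \<in> carrier H"
      and conj: "inv\<^bsub>?G\<^esub> g \<otimes>\<^bsub>?G\<^esub> hnn_emb H K phi b \<otimes>\<^bsub>?G\<^esub> g = hnn_emb H K phi c"
    have "(c, 0) = hnn_val H K phi (hnn_emb H K phi c)"
      using c by (simp add: hnn_val_emb[OF K])
    also have "\<dots> = (inv\<^bsub>H\<^esub> aut_pow H phi (- n) x \<otimes>\<^bsub>H\<^esub> aut_pow H phi (- n) b \<otimes>\<^bsub>H\<^esub> aut_pow H phi (- n) x, 0)"
      using hnn_val_conjugate[OF K g b xn] conj by simp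
    finally show "c = inv\<^bsub>H\<^esub> aut_pow H phi (- n) x \<otimes>\<^bsub>H\<^esub> aut_pow H phi (- n) b \<otimes>\<^bsub>H\<^esub> aut_pow H phi (- n) x"
      by simp
  qed (rule aut_pow_closed[OF x])
qed

end
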